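(* Let $(X_0,X_1,\dots,X_n)$ be a centered Gaussian random vector. Then for any $x>0$, $$P\Big(\max_{j=1,\dots,n}|X_j-X_{j-1}|<x\Big)\le P\Big(\max_{j=1,\dots,n-1}|X_j-X_{j-1}|<x\Big)\,P\big(|X_n-E(X_n\mid\mathcal{F}_{n-1})|<x\big),$$ where $\mathcal{F}_{n-1}=\sigma(X_0,\dots,X_{n-1})$. *)

theory Defs
  imports "HOL-Probability.Probability"
begin

definition centered_gaussian_vector :: "'a measure \<Rightarrow> nat \<Rightarrow> (nat \<Rightarrow> 'a \<Rightarrow> real) \<Rightarrow> bool" where
  "centered_gaussian_vector M n X \<longleftrightarrow>
     (\<forall>i\<le>n. X i \<in> borel_measurable M) \<and>
     (\<forall>c :: nat \<Rightarrow> real.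
        (AE \<omega> in M. (\<Sum>i\<le>n. c i * X i \<omega>) = 0) \<or>
        (\<exists>\<sigma>>0. distributed M lborel (\<lambda>\<omega>. \<Sum>i\<le>n. c i * X i \<omega>) (normal_density 0 \<sigma>)))"

definition gen_sigma :: "'a measure \<Rightarrow> nat \<Rightarrow> (nat \<Rightarrow> 'a \<Rightarrow> real) \<Rightarrow> 'a measure" where
  "gen_sigma M m X =
     sigma (space M) {X i -` A \<inter> space M | i A. i \<le> m \<and> A \<in> sets borel}"

end

theory Submission
  imports Defs
begin

text \<open>Write \<open>X n = P + Y\<close>, where \<open>P\<close> is the \<open>L\<^sup>2\<close>-projection of \<open>X n\<close> onto the span of
  \<open>X 0, \<dots>, X (n - 1)\<close>. The residual \<open>Y\<close> is centered normal and uncorrelated with these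
  variables, so, the vector being Gaussian, the joint characteristic function of
  \<open>(X 0, \<dots>, X (n - 1), Y)\<close> factorises; uniqueness of the Fourier transform, applied one
  coordinate at a time, then makes \<open>Y\<close> independent of \<open>F = \<sigma>(X 0, \<dots>, X (n - 1))\<close>. Hence
  \<open>E(X n | F) = P\<close> and the last factor is \<open>P(|Y| < x)\<close>. The event on the left is
  \<open>A \<inter> {|Y + W| < x}\<close>, where \<open>A \<in> F\<close> is the event of the middle factor and
  \<open>W = P - X (n - 1)\<close> is \<open>F\<close>-measurable. By independence and Fubini its probability is at
  most \<open>P(A)\<close> times the supremum over \<open>w\<close> of \<open>P(|Y + w| < x)\<close>, which by Anderson's
  inequality for the symmetric unimodal normal density is \<open>P(|Y| < x)\<close>.\<close>

section \<open>Uniqueness of the Fourier transform for signed weights\<close>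

lemma integrable_mult_bounded:
  fixes f h :: "'a \<Rightarrow> 'b::{real_normed_field, banach, second_countable_topology}"
  assumes f: "integrable M f" and h[measurable]: "h \<in> borel_measurable M"
    and bound: "\<And>\<omega>. norm (h \<omega>) \<le> 1"
  shows "integrable M (\<lambda>\<omega>. f \<omega> * h \<omega>)"
proof (rule Bochner_Integration.integrable_bound[OF f])
  have [measurable]: "f \<in> borel_measurable M" using f by auto
  show "(\<lambda>\<omega>. f \<omega> * h \<omega>) \<in> borel_measurable M" by measurable
  show "AE \<omega> in M. norm (f \<omega> * h \<omega>) \<le> norm (f \<omega>)"
    using bound by (auto simp: norm_mult intro!: mult_left_le)
qed

lemma char_distr_density:
  fixes g Z :: "'a \<Rightarrow> real"
  assumes [measurable]: "g \<in> borel_measurable M" "Z \<in> borel_measurable M" and "\<And>\<omega>. g \<omega> \<ge> 0"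
  shows "char (distr (density M g) borel Z) u = (\<integral>\<omega>. of_real (g \<omega>) * iexp (u * Z \<omega>) \<partial>M)"
proof -
  have "char (distr (density M g) borel Z) u = (\<integral>\<omega>. iexp (u * Z \<omega>) \<partial>density M g)"
    unfolding char_def by (rule integral_distr) measurable
  also have "\<dots> = (\<integral>\<omega>. g \<omega> *\<^sub>R iexp (u * Z \<omega>) \<partial>M)"
    by (rule integral_density) (use assms in auto)
  finally show ?thesis by (simp add: scaleR_conv_of_real)
qed

lemma integral_indicator_distr_density:
  fixes g Z :: "'a \<Rightarrow> real"
  assumes [measurable]: "g \<in> borel_measurable M" "Z \<in> borel_measurable M" "C \<in> sets borel"
    and "\<And>\<omega>. g \<omega> \<ge> 0"
  shows "(\<integral>y. indicator C y \<partial>distr (density M g) borel Z) = (\<integral>\<omega>. g \<omega> * indicator C (Z \<omega>) \<partial>M)"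
proof -
  have "(\<integral>y. indicator C y \<partial>distr (density M g) borel Z) =
        (\<integral>\<omega>. indicator C (Z \<omega>) \<partial>density M g :: real)"
    by (intro integral_distr) simp_all
  also have "\<dots> = (\<integral>\<omega>. g \<omega> *\<^sub>R indicator C (Z \<omega>) \<partial>M)"
    by (rule integral_density) (use assms in auto)
  finally show ?thesis by simp
qed

lemma real_distribution_distr_density:
  fixes g Z :: "'a \<Rightarrow> real"
  assumes g: "integrable M g" "\<And>\<omega>. g \<omega> \<ge> 0" "(\<integral>\<omega>. g \<omega> \<partial>M) = 1"
    and [measurable]: "Z \<in> borel_measurable M"
  shows "real_distribution (distr (density M g) borel Z)"
proof -
  have [measurable]: "g \<in> borel_measurable M" using g by auto
  have "emeasure (density M g) (space (density M g)) = ennreal (\<integral>\<omega>. g \<omega> \<partial>M)"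
    using g by (simp add: emeasure_density nn_integral_eq_integral)
  then interpret prob_space "density M g"
    by (intro prob_spaceI) (simp add: g)
  show ?thesis by (rule real_distribution_distr) measurable
qed

lemma Levy_uniqueness_density:
  fixes g h Z :: "'a \<Rightarrow> real"
  assumes g: "integrable M g" "\<And>\<omega>. g \<omega> \<ge> 0" and h: "integrable M h" "\<And>\<omega>. h \<omega> \<ge> 0"
    and [measurable]: "Z \<in> borel_measurable M" "C \<in> sets borel"
    and char_eq: "\<And>u. (\<integral>\<omega>. of_real (g \<omega>) * iexp (u * Z \<omega>) \<partial>M) = (\<integral>\<omega>. of_real (h \<omega>) * iexp (u * Z \<omega>) \<partial>M)"
  shows "(\<integral>\<omega>. g \<omega> * indicator C (Z \<omega>) \<partial>M) = (\<integral>\<omega>. h \<omega> * indicator C (Z \<omega>) \<partial>M)"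
proof -
  have [measurable]: "g \<in> borel_measurable M" "h \<in> borel_measurable M"
    using g h by auto
  define m where "m = (\<integral>\<omega>. g \<omega> \<partial>M)"
  have m_h: "m = (\<integral>\<omega>. h \<omega> \<partial>M)"
    using char_eq[of 0] by (simp add: m_def)
  have "m \<ge> 0"
    unfolding m_def using g by simp
  then consider "m = 0" | "m > 0"
    by fastforce
  then show ?thesis
  proof cases
    case 1
    then have "(\<integral>\<omega>. g \<omega> \<partial>M) = 0" "(\<integral>\<omega>. h \<omega> \<partial>M) = 0"
      using m_h by (simp_all add: m_def)
    then have "AE \<omega> in M. g \<omega> = 0" "AE \<omega> in M. h \<omega> = 0"
      using g h by (simp_all add: integral_nonneg_eq_0_iff_AE)
    then have "AE \<omega> in M. g \<omega> * indicator C (Z \<omega>) = 0" "AE \<omega> in M. h \<omega> * indicator C (Z \<omega>) = 0"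
      by auto
    then show ?thesis by (simp add: integral_eq_zero_AE)
  next
    case 2
    have char_scaled: "char (distr (density M (\<lambda>\<omega>. f \<omega> / m)) borel Z) u =
        (\<integral>\<omega>. of_real (f \<omega>) * iexp (u * Z \<omega>) \<partial>M) / of_real m"
      if [measurable]: "f \<in> borel_measurable M" and "\<And>\<omega>. f \<omega> \<ge> 0" for f u
      using that 2 by (simp add: char_distr_density divide_simps mult_ac)
    have law: "real_distribution (distr (density M (\<lambda>\<omega>. f \<omega> / m)) borel Z)"
      if "integrable M f" "\<And>\<omega>. f \<omega> \<ge> 0" "(\<integral>\<omega>. f \<omega> \<partial>M) = m" for f
      using that 2 by (intro real_distribution_distr_density) auto
    have laws_eq: "distr (density M (\<lambda>\<omega>. g \<omega> / m)) borel Z = distr (density M (\<lambda>\<omega>. h \<omega> / m)) borel Z"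
    proof (rule Levy_uniqueness)
      show "char (distr (density M (\<lambda>\<omega>. g \<omega> / m)) borel Z) =
            char (distr (density M (\<lambda>\<omega>. h \<omega> / m)) borel Z)"
        by (rule ext) (use char_eq g h in \<open>simp add: char_scaled\<close>)
    qed (use law[OF g] law[OF h] m_h in \<open>simp_all add: m_def\<close>)
    have "(\<integral>\<omega>. g \<omega> / m * indicator C (Z \<omega>) \<partial>M) =
          (\<integral>y. indicator C y \<partial>distr (density M (\<lambda>\<omega>. g \<omega> / m)) borel Z)"
      using 2 g by (subst integral_indicator_distr_density) auto
    also have "\<dots> = (\<integral>\<omega>. h \<omega> / m * indicator C (Z \<omega>) \<partial>M)"
      using 2 h by (subst laws_eq, subst integral_indicator_distr_density) auto
    finally show ?thesis using 2 by simp
  qed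
qed

lemma Levy_uniqueness_weighted:
  fixes f Z :: "'a \<Rightarrow> real"
  assumes f: "integrable M f" and [measurable]: "Z \<in> borel_measurable M" "C \<in> sets borel"
    and char0: "\<And>u. (\<integral>\<omega>. of_real (f \<omega>) * iexp (u * Z \<omega>) \<partial>M) = 0"
  shows "(\<integral>\<omega>. f \<omega> * indicator C (Z \<omega>) \<partial>M) = 0"
proof -
  define fp where "fp \<omega> = max (f \<omega>) 0" for \<omega>
  define fm where "fm \<omega> = max (- f \<omega>) 0" for \<omega>
  have int: "integrable M fp" "integrable M fm"
    unfolding fp_def fm_def using f by auto
  have f_split: "f \<omega> = fp \<omega> - fm \<omega>" for \<omega>
    by (auto simp: fp_def fm_def)
  have nonneg: "fp \<omega> \<ge> 0" "fm \<omega> \<ge> 0" for \<omega>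
    by (auto simp: fp_def fm_def)
  have int_iexp: "integrable M (\<lambda>\<omega>. of_real (g \<omega>) * iexp (u * Z \<omega>))"
    if "integrable M g" for g :: "'a \<Rightarrow> real" and u
    by (rule integrable_mult_bounded) (use that in auto)
  have "(\<integral>\<omega>. of_real (fp \<omega>) * iexp (u * Z \<omega>) \<partial>M) - (\<integral>\<omega>. of_real (fm \<omega>) * iexp (u * Z \<omega>) \<partial>M) =
        (\<integral>\<omega>. of_real (f \<omega>) * iexp (u * Z \<omega>) \<partial>M)" for u
    by (subst Bochner_Integration.integral_diff[OF int_iexp[OF int(1)] int_iexp[OF int(2)], symmetric])
       (simp add: f_split algebra_simps)
  then have "(\<integral>\<omega>. fp \<omega> * indicator C (Z \<omega>) \<partial>M) = (\<integral>\<omega>. fm \<omega> * indicator C (Z \<omega>) \<partial>M)"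
    using char0 by (intro Levy_uniqueness_density int nonneg) auto
  moreover have "integrable M (\<lambda>\<omega>. g \<omega> * indicator C (Z \<omega>))" if "integrable M g" for g :: "'a \<Rightarrow> real"
    by (rule integrable_mult_bounded) (use that in auto)
  ultimately show ?thesis
    using int by (simp add: f_split left_diff_distrib)
qed

lemma cnj_mult_iexp_uminus: "cnj (z * iexp (- t)) = cnj z * iexp t"
  by (simp add: exp_cnj)

lemma Re_mult_iexp: "of_real (Re z) * iexp t = (z * iexp t + cnj (z * iexp (- t))) / 2"
proof -
  have Re: "of_real (Re z) = (z + cnj z) / 2" by (simp add: complex_add_cnj)
  show ?thesis unfolding cnj_mult_iexp_uminus Re by (simp add: field_simps)
qed

lemma Im_mult_iexp: "of_real (Im z) * iexp t = (z * iexp t - cnj (z * iexp (- t))) / (2 * \<i>)"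
proof -
  have Im: "of_real (Im z) = (z - cnj z) / (2 * \<i>)" by (simp add: complex_eq_iff)
  show ?thesis unfolding cnj_mult_iexp_uminus Im by (simp add: field_simps)
qed

lemma Levy_uniqueness_weighted_complex:
  fixes f :: "'a \<Rightarrow> complex" and Z :: "'a \<Rightarrow> real"
  assumes f: "integrable M f" and [measurable]: "Z \<in> borel_measurable M" "C \<in> sets borel"
    and char0: "\<And>u. (\<integral>\<omega>. f \<omega> * iexp (u * Z \<omega>) \<partial>M) = 0"
  shows "(\<integral>\<omega>. f \<omega> * indicator C (Z \<omega>) \<partial>M) = 0"
proof -
  have int: "integrable M (\<lambda>\<omega>. f \<omega> * iexp (u * Z \<omega>))" for u
    by (rule integrable_mult_bounded) (use f in auto)
  have int_cnj: "integrable M (\<lambda>\<omega>. cnj (f \<omega> * iexp (- u * Z \<omega>)))" for u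
    using integrable_cnj[OF int[of "- u"]] .
  have "(\<integral>\<omega>. of_real (Re (f \<omega>)) * iexp (u * Z \<omega>) \<partial>M) =
        (\<integral>\<omega>. (f \<omega> * iexp (u * Z \<omega>) + cnj (f \<omega> * iexp (- u * Z \<omega>))) / 2 \<partial>M)" for u
    by (simp only: Re_mult_iexp minus_mult_left)
  also have "\<dots> u = 0" for u
    by (simp only: integral_divide_zero Bochner_Integration.integral_add[OF int int_cnj]
          Bochner_Integration.integral_cnj char0 complex_cnj_zero) simp
  finally have Re0: "(\<integral>\<omega>. Re (f \<omega>) * indicator C (Z \<omega>) \<partial>M) = 0"
    using f by (intro Levy_uniqueness_weighted) auto
  have "(\<integral>\<omega>. of_real (Im (f \<omega>)) * iexp (u * Z \<omega>) \<partial>M) =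
        (\<integral>\<omega>. (f \<omega> * iexp (u * Z \<omega>) - cnj (f \<omega> * iexp (- u * Z \<omega>))) / (2 * \<i>) \<partial>M)" for u
    by (simp only: Im_mult_iexp minus_mult_left)
  also have "\<dots> u = 0" for u
    by (simp only: integral_divide_zero Bochner_Integration.integral_diff[OF int int_cnj]
          Bochner_Integration.integral_cnj char0 complex_cnj_zero) simp
  finally have Im0: "(\<integral>\<omega>. Im (f \<omega>) * indicator C (Z \<omega>) \<partial>M) = 0"
    using f by (intro Levy_uniqueness_weighted) auto
  have int_ind: "integrable M (\<lambda>\<omega>. f \<omega> * indicator C (Z \<omega>))"
    by (rule integrable_mult_bounded) (use f in \<open>auto simp: indicator_def\<close>)
  have "Re (\<integral>\<omega>. f \<omega> * indicator C (Z \<omega>) \<partial>M) = (\<integral>\<omega>. Re (f \<omega>) * indicator C (Z \<omega>) \<partial>M)"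
       "Im (\<integral>\<omega>. f \<omega> * indicator C (Z \<omega>) \<partial>M) = (\<integral>\<omega>. Im (f \<omega>) * indicator C (Z \<omega>) \<partial>M)"
    by (simp_all only: integral_Re[OF int_ind, symmetric] integral_Im[OF int_ind, symmetric])
       (auto intro!: Bochner_Integration.integral_cong simp: indicator_def)
  then show ?thesis
    using Re0 Im0 by (simp add: complex_eq_iff)
qed

section \<open>Anderson's inequality on the line\<close>

lemma emeasure_Diff_symmetric:
  assumes [measurable]: "A \<in> sets M" "B \<in> sets M"
    and "emeasure M A = emeasure M B" "emeasure M A < \<infinity>"
  shows "emeasure M (A - B) = emeasure M (B - A)"
proof -
  have split: "emeasure M (S \<inter> T) + emeasure M (S - T) = emeasure M S"
    if "S \<in> sets M" "T \<in> sets M" for S T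
    using that by (subst plus_emeasure) (auto simp: Int_Diff_Un)
  have "emeasure M (A \<inter> B) + emeasure M (A - B) = emeasure M (A \<inter> B) + emeasure M (B - A)"
    using split[of A B] split[of B A] assms(3) by (simp add: Int_commute)
  moreover have "emeasure M (A \<inter> B) < \<infinity>"
    using emeasure_mono[of "A \<inter> B" A M] assms(4) by auto
  ultimately show ?thesis
    by (auto simp: ennreal_add_left_cancel)
qed

text \<open>On the part of the centred interval outside the shifted
  one the density is at least \<open>f x\<close>, on the part of the shifted interval outside the centred one
  it is at most \<open>f x\<close>, and the two parts have the same length.\<close>

lemma nn_set_integral_shifted_interval_le:
  fixes f :: "real \<Rightarrow> ennreal"
  assumes [measurable]: "f \<in> borel_measurable borel"
    and symmetric_decreasing: "\<And>a b. \<bar>a\<bar> \<le> \<bar>b\<bar> \<Longrightarrow> f b \<le> f a"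
  shows "(\<integral>\<^sup>+y\<in>{y. \<bar>y + w\<bar> < x}. f y \<partial>lborel) \<le> (\<integral>\<^sup>+y\<in>{y. \<bar>y\<bar> < x}. f y \<partial>lborel)"
proof (cases "x > 0")
  case False
  then have "{y. \<bar>y + w\<bar> < x} = {}" by auto
  then show ?thesis by simp
next
  case True
  define I where "I = {y::real. \<bar>y\<bar> < x}"
  define J where "J = {y::real. \<bar>y + w\<bar> < x}"
  have I: "I = {-x<..<x}" and J: "J = {-x-w<..<x-w}"
    unfolding I_def J_def by auto
  have [measurable]: "I \<in> sets borel" "J \<in> sets borel"
    unfolding I J by auto
  have Diff_eq: "emeasure lborel (J - I) = emeasure lborel (I - J)"
    by (rule emeasure_Diff_symmetric) (use True in \<open>auto simp: I J\<close>)
  have split: "(\<integral>\<^sup>+y\<in>S. f y \<partial>lborel) = (\<integral>\<^sup>+y\<in>J \<inter> I. f y \<partial>lborel) + (\<integral>\<^sup>+y\<in>S - J \<inter> I. f y \<partial>lborel)"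
    if [measurable]: "S \<in> sets borel" "J \<inter> I \<subseteq> S" for S
    using nn_integral_disjoint_pair[of f lborel "J \<inter> I" "S - J \<inter> I"] that
    by (simp add: Un_absorb1)
  have "(\<integral>\<^sup>+y\<in>J - I. f y \<partial>lborel) \<le> (\<integral>\<^sup>+y. f x * indicator (J - I) y \<partial>lborel)"
    using True by (intro nn_integral_mono) (auto simp: I_def indicator_def intro!: symmetric_decreasing)
  also have "\<dots> = (\<integral>\<^sup>+y. f x * indicator (I - J) y \<partial>lborel)"
    by (simp add: nn_integral_cmult_indicator Diff_eq)
  also have "\<dots> \<le> (\<integral>\<^sup>+y\<in>I - J. f y \<partial>lborel)"
    by (intro nn_integral_mono) (auto simp: I_def indicator_def intro!: symmetric_decreasing)
  finally have "(\<integral>\<^sup>+y\<in>J - J \<inter> I. f y \<partial>lborel) \<le> (\<integral>\<^sup>+y\<in>I - J \<inter> I. f y \<partial>lborel)"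
    by (simp add: Diff_Int2 Int_absorb Diff_Int)
  then show ?thesis
    unfolding I_def[symmetric] J_def[symmetric] split[of J, simplified] split[of I, simplified]
    by (simp add: add_left_mono)
qed

lemma normal_density_abs_mono:
  assumes "\<sigma> > 0" "\<bar>a\<bar> \<le> \<bar>b\<bar>"
  shows "normal_density 0 \<sigma> b \<le> normal_density 0 \<sigma> a"
proof -
  have "a\<^sup>2 \<le> b\<^sup>2" using assms(2) by (simp add: abs_le_square_iff)
  then show ?thesis
    using assms(1) unfolding normal_density_def
    by (intro mult_left_mono) (auto intro!: divide_right_mono)
qed

lemma (in prob_space) normal_prob_abs_add_less_le:
  assumes D: "distributed M lborel Y (normal_density 0 \<sigma>)" and "\<sigma> > 0"
  shows "prob {\<omega> \<in> space M. \<bar>Y \<omega> + w\<bar> < x} \<le> prob {\<omega> \<in> space M. \<bar>Y \<omega>\<bar> < x}"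
proof -
  have prob_eq: "emeasure M {\<omega> \<in> space M. Y \<omega> \<in> S} = (\<integral>\<^sup>+y\<in>S. normal_density 0 \<sigma> y \<partial>lborel)"
    if "S \<in> sets borel" for S
    using distributed_emeasure[OF D, of S] that by (simp add: vimage_def Int_def conj_commute)
  have "emeasure M {\<omega> \<in> space M. \<bar>Y \<omega> + w\<bar> < x} \<le> emeasure M {\<omega> \<in> space M. \<bar>Y \<omega>\<bar> < x}"
    using prob_eq[of "{y. \<bar>y + w\<bar> < x}"] prob_eq[of "{y. \<bar>y\<bar> < x}"] \<open>\<sigma> > 0\<close>
    by (auto intro!: nn_set_integral_shifted_interval_le ennreal_leI normal_density_abs_mono)
  then show ?thesis by (simp add: emeasure_eq_measure)
qed

definition centered_normal :: "'a measure \<Rightarrow> ('a \<Rightarrow> real) \<Rightarrow> bool" where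
  "centered_normal M Z \<longleftrightarrow> Z \<in> borel_measurable M \<and>
     ((AE \<omega> in M. Z \<omega> = 0) \<or> (\<exists>\<sigma>>0. distributed M lborel Z (normal_density 0 \<sigma>)))"

lemma (in prob_space)
  assumes "centered_normal M Z"
  shows centered_normal_integrable_square: "integrable M (\<lambda>\<omega>. (Z \<omega>)\<^sup>2)"
    and centered_normal_integrable: "integrable M Z"
    and centered_normal_expectation: "expectation Z = 0"
    and centered_normal_char:
      "expectation (\<lambda>\<omega>. iexp (Z \<omega>)) = of_real (exp (- expectation (\<lambda>\<omega>. (Z \<omega>)\<^sup>2) / 2))"
proof -
  have [measurable]: "Z \<in> borel_measurable M"
    using assms by (simp add: centered_normal_def)
  consider "AE \<omega> in M. Z \<omega> = 0" | \<sigma> where "\<sigma> > 0" "distributed M lborel Z (normal_density 0 \<sigma>)"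
    using assms by (auto simp: centered_normal_def)
  then have "integrable M (\<lambda>\<omega>. (Z \<omega>)\<^sup>2) \<and> integrable M Z \<and> expectation Z = 0 \<and>
    expectation (\<lambda>\<omega>. iexp (Z \<omega>)) = of_real (exp (- expectation (\<lambda>\<omega>. (Z \<omega>)\<^sup>2) / 2))"
  proof cases
    case 1
    then have "AE \<omega> in M. (Z \<omega>)\<^sup>2 = 0" "AE \<omega> in M. iexp (Z \<omega>) = 1"
      by auto
    with 1 show ?thesis
      by (simp add: integrable_cong_AE[where g="\<lambda>_. 0"] integral_cong_AE[where g="\<lambda>_. 0"]
          integral_cong_AE[where g="\<lambda>_. 1"] prob_space)
  next
    case (2 \<sigma>)
    have "integrable M (\<lambda>\<omega>. (Z \<omega>)\<^sup>2)" "integrable M Z"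
      using distributed_integrable[OF 2(2), of "\<lambda>x. x\<^sup>2"] distributed_integrable[OF 2(2), of "\<lambda>x. x"]
        integrable_normal_moment[where \<mu>=0 and \<sigma>=\<sigma> and k=2]
        integrable_normal_moment[where \<mu>=0 and \<sigma>=\<sigma> and k=1] 2(1)
      by simp_all
    moreover have mean: "expectation Z = 0"
      by (rule normal_distributed_expectation[OF 2])
    moreover have "expectation (\<lambda>\<omega>. (Z \<omega>)\<^sup>2) = \<sigma>\<^sup>2"
      using normal_distributed_variance[OF 2] mean by simp
    moreover have "distr M lborel (\<lambda>\<omega>. Z \<omega> / \<sigma>) = std_normal_distribution"
      using normal_standard_normal_convert[OF 2(1), of Z 0] 2(2) by (simp add: distributed_def)
    moreover have "char (distr M lborel (\<lambda>\<omega>. Z \<omega> / \<sigma>)) \<sigma> = expectation (\<lambda>\<omega>. iexp (Z \<omega>))"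
      unfolding char_def using 2(1) by (subst integral_distr) simp_all
    ultimately show ?thesis
      by (simp add: char_std_normal_distribution)
  qed
  then show "integrable M (\<lambda>\<omega>. (Z \<omega>)\<^sup>2)" "integrable M Z" "expectation Z = 0"
    "expectation (\<lambda>\<omega>. iexp (Z \<omega>)) = of_real (exp (- expectation (\<lambda>\<omega>. (Z \<omega>)\<^sup>2) / 2))"
    by auto
qed

lemma (in prob_space) centered_normal_prob_abs_add_less_le:
  assumes "centered_normal M Z" "x > 0"
  shows "prob {\<omega> \<in> space M. \<bar>Z \<omega> + w\<bar> < x} \<le> prob {\<omega> \<in> space M. \<bar>Z \<omega>\<bar> < x}"
proof -
  have [measurable]: "Z \<in> borel_measurable M"
    using assms by (simp add: centered_normal_def)
  consider "AE \<omega> in M. Z \<omega> = 0" | \<sigma> where "\<sigma> > 0" "distributed M lborel Z (normal_density 0 \<sigma>)"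
    using assms by (auto simp: centered_normal_def)
  then show ?thesis
  proof cases
    case 1
    then have "prob {\<omega> \<in> space M. \<bar>Z \<omega>\<bar> < x} = prob (space M)"
      using \<open>x > 0\<close> by (intro measure_eq_AE) auto
    then show ?thesis by (simp add: prob_space)
  next
    case 2
    then show ?thesis by (intro normal_prob_abs_add_less_le)
  qed
qed

section \<open>Orthogonal projection for a positive semidefinite form\<close>

definition unit_vec :: "nat \<Rightarrow> nat \<Rightarrow> real" where
  "unit_vec j i = (if i = j then 1 else 0)"

locale psd_form =
  fixes B :: "(nat \<Rightarrow> real) \<Rightarrow> (nat \<Rightarrow> real) \<Rightarrow> real"
  assumes add_left: "B (\<lambda>i. c i + d i) e = B c e + B d e"
    and scale_left: "B (\<lambda>i. r * c i) e = r * B c e"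
    and commute: "B c d = B d c"
    and nonneg: "B c c \<ge> 0"
begin

lemma diff_left: "B (\<lambda>i. c i - d i) e = B c e - B d e"
  using add_left[of c "\<lambda>i. - 1 * d i" e] scale_left[of "- 1" d e] by simp

lemma add_right: "B e (\<lambda>i. c i + d i) = B e c + B e d"
  using add_left commute by metis

lemma scale_right: "B e (\<lambda>i. r * c i) = r * B e c"
  using scale_left commute by metis

lemma sum_left: "finite S \<Longrightarrow> B (\<lambda>i. \<Sum>j\<in>S. f j i) e = (\<Sum>j\<in>S. B (f j) e)"
proof (induction S rule: finite_induct)
  case empty
  show ?case using scale_left[of 0 e e] by simp
next
  case (insert x F)
  then show ?case by (simp add: add_left)
qed

lemma orthogonal_span:
  assumes "\<And>j. j < k \<Longrightarrow> B c (unit_vec j) = 0" and "\<And>i. i \<ge> k \<Longrightarrow> d i = 0"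
  shows "B c d = 0"
proof -
  have "d = (\<lambda>i. \<Sum>j<k. d j * unit_vec j i)"
  proof
    fix i
    show "d i = (\<Sum>j<k. d j * unit_vec j i)"
      using assms(2)
      by (cases "i < k")
        (auto simp: unit_vec_def not_less mult.commute[of "d _"] if_distrib cong: if_cong)
  qed
  then have "B d c = B (\<lambda>i. \<Sum>j<k. d j * unit_vec j i) c"
    by (rule arg_cong)
  also have "\<dots> = (\<Sum>j<k. B (\<lambda>i. d j * unit_vec j i) c)"
    by (rule sum_left) simp
  also have "\<dots> = 0"
    using assms(1) by (simp add: scale_left commute[of "unit_vec _" c])
  finally show ?thesis by (simp add: commute[of c d])
qed

lemma orthogonal_if_null:
  assumes "B c c = 0"
  shows "B c d = 0"
proof -
  define b D where "b = B c d" and "D = B d d"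
  define t where "t = - b / (1 + D)"
  have "D \<ge> 0" unfolding D_def by (rule nonneg)
  have "0 \<le> B (\<lambda>i. c i + t * d i) (\<lambda>i. c i + t * d i)" by (rule nonneg)
  also have "\<dots> = 2 * t * b + t\<^sup>2 * D"
    using assms by (simp add: add_left add_right scale_left scale_right b_def D_def commute[of d c]
        power2_eq_square algebra_simps)
  finally have "0 \<le> (1 + D)\<^sup>2 * (2 * t * b + t\<^sup>2 * D)" by simp
  also have "\<dots> = 2 * b * (t * (1 + D)) * (1 + D) + (t * (1 + D))\<^sup>2 * D"
    by (simp add: algebra_simps power2_eq_square)
  also have "t * (1 + D) = - b"
    using \<open>D \<ge> 0\<close> by (simp add: t_def)
  finally have "0 \<le> - b\<^sup>2 * (2 + D)"
    by (simp add: algebra_simps power2_eq_square)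
  then show ?thesis
    using \<open>D \<ge> 0\<close> by (simp add: b_def mult_le_0_iff)
qed

text \<open>Gram--Schmidt; a direction \<open>E\<close> with \<open>B E E = 0\<close> is orthogonal to everything and is
  skipped, so the form may be degenerate.\<close>

lemma projection_exists:
  "\<exists>a. (\<forall>i\<ge>k. a i = 0) \<and> (\<forall>j<k. B (\<lambda>i. t i - a i) (unit_vec j) = 0)"
proof (induction k arbitrary: t)
  case 0
  show ?case by (rule exI[of _ "\<lambda>i. 0"]) simp
next
  case (Suc k)
  obtain a where a_supp: "\<forall>i\<ge>k. a i = 0" and a_orth: "\<forall>j<k. B (\<lambda>i. t i - a i) (unit_vec j) = 0"
    using Suc.IH[of t] by blast
  obtain b where b_supp: "\<forall>i\<ge>k. b i = 0" and b_orth: "\<forall>j<k. B (\<lambda>i. unit_vec k i - b i) (unit_vec j) = 0"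
    using Suc.IH[of "unit_vec k"] by blast
  define R where "R = (\<lambda>i. t i - a i)"
  define E where "E = (\<lambda>i. unit_vec k i - b i)"
  have unit_vec_k: "unit_vec k = (\<lambda>i. E i + b i)"
    by (simp add: E_def)
  have on_k: "B c (unit_vec k) = B c E" if "\<forall>j<k. B c (unit_vec j) = 0" for c
    using orthogonal_span[of k c b] that b_supp by (simp add: unit_vec_k add_right)
  show ?case
  proof (cases "B E E = 0")
    case True
    have "B R (unit_vec k) = 0"
      using on_k[of R] a_orth orthogonal_if_null[OF True, of R] by (simp add: R_def commute)
    then show ?thesis
      using a_supp a_orth unfolding R_def by (intro exI[of _ a]) (auto simp: less_Suc_eq)
  next
    case False
    define l where "l = B R E / B E E"
    have orth: "\<forall>j<k. B (\<lambda>i. R i - l * E i) (unit_vec j) = 0"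
      using a_orth b_orth by (simp add: diff_left scale_left R_def E_def)
    have "B (\<lambda>i. R i - l * E i) E = B R E - l * B E E"
      by (simp only: diff_left scale_left)
    then have "B (\<lambda>i. R i - l * E i) E = 0"
      using False by (simp add: l_def)
    then have "B (\<lambda>i. R i - l * E i) (unit_vec k) = 0"
      using on_k[OF orth] by simp
    moreover have "\<forall>i\<ge>Suc k. a i + l * E i = 0"
      using a_supp b_supp by (simp add: E_def unit_vec_def)
    moreover have "(\<lambda>i. t i - (a i + l * E i)) = (\<lambda>i. R i - l * E i)"
      by (simp add: R_def algebra_simps)
    ultimately show ?thesis
      using orth by (intro exI[of _ "\<lambda>i. a i + l * E i"]) (auto simp: less_Suc_eq)
  qed
qed

end

section \<open>Independence from a factorising characteristic function\<close>

definition cylinder :: "'a measure \<Rightarrow> (nat \<Rightarrow> 'a \<Rightarrow> real) \<Rightarrow> nat \<Rightarrow> (nat \<Rightarrow> real set) \<Rightarrow> 'a set" where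
  "cylinder M X k C = {\<omega> \<in> space M. \<forall>i<k. X i \<omega> \<in> C i}"

lemma cylinder_0 [simp]: "cylinder M X 0 C = space M"
  by (simp add: cylinder_def)

lemma cylinder_Suc: "cylinder M X (Suc k) C = cylinder M X k C \<inter> (X k -` C k \<inter> space M)"
  by (auto simp: cylinder_def less_Suc_eq)

lemma sets_cylinder:
  assumes "\<And>i. i < k \<Longrightarrow> X i \<in> borel_measurable M" "\<And>i. i < k \<Longrightarrow> C i \<in> sets borel"
  shows "cylinder M X k C \<in> sets M"
  using assms by (induction k) (auto simp: cylinder_Suc measurable_sets)

lemma Int_stable_cylinders: "Int_stable {cylinder M X k C | C. \<forall>i. C i \<in> sets borel}"
proof (rule Int_stableI)
  fix a b
  assume "a \<in> {cylinder M X k C | C. \<forall>i. C i \<in> sets borel}"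
    and "b \<in> {cylinder M X k C | C. \<forall>i. C i \<in> sets borel}"
  then obtain C D where "a = cylinder M X k C" "b = cylinder M X k D"
    and "\<forall>i. C i \<in> sets borel" "\<forall>i. D i \<in> sets borel"
    by auto
  moreover have "cylinder M X k C \<inter> cylinder M X k D = cylinder M X k (\<lambda>i. C i \<inter> D i)"
    by (auto simp: cylinder_def)
  ultimately show "a \<inter> b \<in> {cylinder M X k C | C. \<forall>i. C i \<in> sets borel}"
    by auto
qed

lemma Int_stable_vimage: "Int_stable {Y -` B \<inter> \<Omega> | B. B \<in> sets N}"
proof (rule Int_stableI)
  fix a b assume "a \<in> {Y -` B \<inter> \<Omega> | B. B \<in> sets N}" "b \<in> {Y -` B \<inter> \<Omega> | B. B \<in> sets N}"
  then obtain A B where "a = Y -` A \<inter> \<Omega>" "b = Y -` B \<inter> \<Omega>" "A \<in> sets N" "B \<in> sets N"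
    by auto
  then have "a \<inter> b = Y -` (A \<inter> B) \<inter> \<Omega>" "A \<inter> B \<in> sets N"
    by auto
  then show "a \<inter> b \<in> {Y -` B \<inter> \<Omega> | B. B \<in> sets N}"
    by blast
qed

lemma sigma_sets_vimage_sets:
  assumes "Y \<in> \<Omega> \<rightarrow> space N"
  shows "sigma_sets \<Omega> {Y -` B \<inter> \<Omega> | B. B \<in> sets N} = {Y -` B \<inter> \<Omega> | B. B \<in> sets N}"
  using sigma_sets_vimage_commute[OF assms, of "sets N"] sets.sigma_sets_eq[of N] by simp

lemma sets_gen_sigma:
  "sets (gen_sigma M m X) = sigma_sets (space M) {X i -` A \<inter> space M | i A. i \<le> m \<and> A \<in> sets borel}"
  unfolding gen_sigma_def by (intro sets_measure_of) auto

lemma space_gen_sigma [simp]: "space (gen_sigma M m X) = space M"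
  unfolding gen_sigma_def by (intro space_measure_of) auto

lemma measurable_gen_sigma:
  assumes "i \<le> m"
  shows "X i \<in> borel_measurable (gen_sigma M m X)"
proof (rule measurableI)
  fix A :: "real set" assume "A \<in> sets borel"
  then show "X i -` A \<inter> space (gen_sigma M m X) \<in> sets (gen_sigma M m X)"
    using assms unfolding sets_gen_sigma space_gen_sigma by blast
qed simp

lemma subalgebra_gen_sigma:
  assumes "\<And>i. i \<le> m \<Longrightarrow> X i \<in> borel_measurable M"
  shows "subalgebra M (gen_sigma M m X)"
proof -
  have "{X i -` A \<inter> space M | i A. i \<le> m \<and> A \<in> sets borel} \<subseteq> sets M"
    using assms measurable_sets by blast
  then show ?thesis
    unfolding subalgebra_def sets_gen_sigma space_gen_sigma by (simp add: sets.sigma_sets_subset)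
qed

lemma sets_gen_sigma_subset_cylinders:
  "sets (gen_sigma M m X) \<subseteq> sigma_sets (space M) {cylinder M X (Suc m) C | C. \<forall>i. C i \<in> sets borel}"
proof -
  have "X i -` A \<inter> space M = cylinder M X (Suc m) (\<lambda>j. if j = i then A else UNIV)" if "i \<le> m" for i A
    using that by (auto simp: cylinder_def)
  then have "{X i -` A \<inter> space M | i A. i \<le> m \<and> A \<in> sets borel} \<subseteq>
      {cylinder M X (Suc m) C | C. \<forall>i. C i \<in> sets borel}"
    by fastforce
  then show ?thesis
    unfolding sets_gen_sigma by (rule sigma_sets_mono')
qed

locale char_factorization = prob_space +
  fixes m :: nat and X :: "nat \<Rightarrow> 'a \<Rightarrow> real" and Y :: "'a \<Rightarrow> real"
  assumes measurable_X: "\<And>i. i \<le> m \<Longrightarrow> X i \<in> borel_measurable M"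
    and measurable_Y [measurable]: "Y \<in> borel_measurable M"
    and char_factorizes: "\<And>s t. expectation (\<lambda>\<omega>. iexp (s * Y \<omega> + (\<Sum>j\<le>m. t j * X j \<omega>))) =
      expectation (\<lambda>\<omega>. iexp (\<Sum>j\<le>m. t j * X j \<omega>)) * expectation (\<lambda>\<omega>. iexp (s * Y \<omega>))"
begin

lemma sets_cylinder_X:
  "k \<le> Suc m \<Longrightarrow> (\<And>i. C i \<in> sets borel) \<Longrightarrow> cylinder M X k C \<in> events"
  by (rule sets_cylinder) (auto intro: measurable_X)

definition tail_sum :: "nat \<Rightarrow> (nat \<Rightarrow> real) \<Rightarrow> 'a \<Rightarrow> real" where
  "tail_sum k t \<omega> = (\<Sum>j\<in>{k..m}. t j * X j \<omega>)"

lemma measurable_tail_sum [measurable]: "tail_sum k t \<in> borel_measurable M"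
  unfolding tail_sum_def[abs_def] using measurable_X
  by (intro borel_measurable_sum borel_measurable_times) auto

lemma measurable_exponent [measurable]: "(\<lambda>\<omega>. s * Y \<omega> + tail_sum k t \<omega>) \<in> borel_measurable M"
  by measurable

lemma tail_sum_fun_upd:
  assumes "k \<le> m"
  shows "tail_sum k (t(k := u)) \<omega> = u * X k \<omega> + tail_sum (Suc k) t \<omega>"
proof -
  have "{k..m} = insert k {Suc k..m}" using assms by auto
  moreover have "(\<Sum>j\<in>{Suc k..m}. (t(k := u)) j * X j \<omega>) = (\<Sum>j\<in>{Suc k..m}. t j * X j \<omega>)"
    by (rule sum.cong) auto
  ultimately show ?thesis unfolding tail_sum_def by simp
qed

lemma norm_char_le_1: "norm (expectation (\<lambda>\<omega>. iexp (s * Y \<omega>))) \<le> 1"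
  using integral_norm_bound[of M "\<lambda>\<omega>. iexp (s * Y \<omega>)"] by (simp add: prob_space)

lemma integrable_indicator_iexp:
  assumes [measurable]: "A \<in> events" "g \<in> borel_measurable M"
  shows "integrable M (\<lambda>\<omega>. indicator A \<omega> * iexp (g \<omega>))"
  by (intro integrable_const_bound[where B=1] AE_I2) (auto simp: norm_mult indicator_def)

lemma integral_indicator_iexp_diff:
  assumes [measurable]: "A \<in> events" "g \<in> borel_measurable M" "h \<in> borel_measurable M"
  shows "(\<integral>\<omega>. indicator A \<omega> * iexp (g \<omega>) - c * (indicator A \<omega> * iexp (h \<omega>)) \<partial>M) =
    (\<integral>\<omega>. indicator A \<omega> * iexp (g \<omega>) \<partial>M) - c * (\<integral>\<omega>. indicator A \<omega> * iexp (h \<omega>) \<partial>M)"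
  by (subst Bochner_Integration.integral_diff)
    (auto intro!: integrable_mult_right integrable_indicator_iexp)

text \<open>The Fourier variable \<open>t k\<close> of \<open>X k\<close> is traded for the indicator of \<open>X k \<in> C k\<close> by
  uniqueness of the Fourier transform.\<close>

lemma char_factorizes_on_cylinder_Suc:
  assumes k: "k \<le> m" and C: "\<And>i. C i \<in> sets borel"
    and IH: "\<And>t. (\<integral>\<omega>. indicator (cylinder M X k C) \<omega> * iexp (s * Y \<omega> + tail_sum k t \<omega>) \<partial>M) =
      (\<integral>\<omega>. indicator (cylinder M X k C) \<omega> * iexp (tail_sum k t \<omega>) \<partial>M) * expectation (\<lambda>\<omega>. iexp (s * Y \<omega>))"
  shows "(\<integral>\<omega>. indicator (cylinder M X (Suc k) C) \<omega> * iexp (s * Y \<omega> + tail_sum (Suc k) t \<omega>) \<partial>M) =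
    (\<integral>\<omega>. indicator (cylinder M X (Suc k) C) \<omega> * iexp (tail_sum (Suc k) t \<omega>) \<partial>M) *
    expectation (\<lambda>\<omega>. iexp (s * Y \<omega>))"
proof -
  let ?\<phi> = "expectation (\<lambda>\<omega>. iexp (s * Y \<omega>))"
  have cyl [measurable]: "cylinder M X k C \<in> events" "cylinder M X (Suc k) C \<in> events"
    using k by (auto intro!: sets_cylinder_X C)
  have [measurable]: "X k \<in> borel_measurable M"
    using measurable_X k by simp
  define f where "f \<omega> = indicator (cylinder M X k C) \<omega> *
      (iexp (s * Y \<omega> + tail_sum (Suc k) t \<omega>) - ?\<phi> * iexp (tail_sum (Suc k) t \<omega>))" for \<omega>
  have int_f: "integrable M f"
  proof (intro integrable_const_bound[where B=2] AE_I2)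
    show "norm (f \<omega>) \<le> 2" for \<omega>
      using norm_triangle_ineq4[of "iexp (s * Y \<omega> + tail_sum (Suc k) t \<omega>)"
          "?\<phi> * iexp (tail_sum (Suc k) t \<omega>)"] norm_char_le_1[of s]
      by (auto simp: f_def norm_mult indicator_def)
  qed (unfold f_def, measurable)
  have "(\<integral>\<omega>. f \<omega> * iexp (u * X k \<omega>) \<partial>M) =
      (\<integral>\<omega>. indicator (cylinder M X k C) \<omega> * iexp (s * Y \<omega> + tail_sum k (t(k := u)) \<omega>) -
             ?\<phi> * (indicator (cylinder M X k C) \<omega> * iexp (tail_sum k (t(k := u)) \<omega>)) \<partial>M)" for u
    by (rule Bochner_Integration.integral_cong)
       (simp_all add: f_def tail_sum_fun_upd[OF k] exp_add distrib_left algebra_simps)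
  also have "\<dots> u = 0" for u
    by (simp only: integral_indicator_iexp_diff[OF cyl(1) measurable_exponent measurable_tail_sum] IH
        mult.commute diff_self)
  finally have "(\<integral>\<omega>. f \<omega> * indicator (C k) (X k \<omega>) \<partial>M) = 0"
    by (intro Levy_uniqueness_weighted_complex[OF int_f] C) auto
  moreover have "(\<integral>\<omega>. f \<omega> * indicator (C k) (X k \<omega>) \<partial>M) =
      (\<integral>\<omega>. indicator (cylinder M X (Suc k) C) \<omega> * iexp (s * Y \<omega> + tail_sum (Suc k) t \<omega>) -
            ?\<phi> * (indicator (cylinder M X (Suc k) C) \<omega> * iexp (tail_sum (Suc k) t \<omega>)) \<partial>M)"
    by (rule Bochner_Integration.integral_cong) (auto simp: f_def cylinder_Suc indicator_def)
  ultimately show ?thesis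
    by (simp only: integral_indicator_iexp_diff[OF cyl(2) measurable_exponent measurable_tail_sum]
        mult.commute right_minus_eq)
qed

lemma char_factorizes_on_cylinder:
  assumes "k \<le> Suc m" and C: "\<And>i. C i \<in> sets borel"
  shows "(\<integral>\<omega>. indicator (cylinder M X k C) \<omega> * iexp (s * Y \<omega> + tail_sum k t \<omega>) \<partial>M) =
    (\<integral>\<omega>. indicator (cylinder M X k C) \<omega> * iexp (tail_sum k t \<omega>) \<partial>M) * expectation (\<lambda>\<omega>. iexp (s * Y \<omega>))"
  using assms(1)
proof (induction k arbitrary: t)
  case 0
  have "(\<integral>\<omega>. indicator (space M) \<omega> * g \<omega> \<partial>M) = expectation g" for g :: "'a \<Rightarrow> complex"
    by (rule Bochner_Integration.integral_cong) auto
  then show ?case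
    using char_factorizes[of s t] by (simp add: tail_sum_def atLeast0AtMost)
next
  case (Suc k)
  then show ?case
    by (intro char_factorizes_on_cylinder_Suc C) simp_all
qed

lemma expectation_indicator_complex:
  assumes "A \<in> events"
  shows "(\<integral>\<omega>. indicator A \<omega> \<partial>M) = complex_of_real (prob A)"
proof -
  have "(\<lambda>\<omega>. indicator A \<omega> :: complex) = (\<lambda>\<omega>. complex_of_real (indicator A \<omega>))"
    by (auto simp: indicator_def)
  then show ?thesis
    using assms sets.sets_into_space[OF assms] by (simp add: Int_absorb2)
qed

lemma prob_cylinder_Int_vimage:
  assumes C: "\<And>i. C i \<in> sets borel" and B [measurable]: "B \<in> sets borel"
  defines "A \<equiv> cylinder M X (Suc m) C"
  shows "prob (A \<inter> (Y -` B \<inter> space M)) = prob A * prob (Y -` B \<inter> space M)"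
proof -
  have A [measurable]: "A \<in> events"
    unfolding A_def by (intro sets_cylinder_X C) simp
  have "(\<integral>\<omega>. indicator A \<omega> * iexp (s * Y \<omega>) \<partial>M) =
      of_real (prob A) * expectation (\<lambda>\<omega>. iexp (s * Y \<omega>))" for s
    using char_factorizes_on_cylinder[OF order.refl, where C=C and s=s and t="\<lambda>_. 0"] A C
    by (simp add: A_def tail_sum_def expectation_indicator_complex)
  moreover have "(\<integral>\<omega>. of_real (indicator A \<omega> - prob A) * iexp (s * Y \<omega>) \<partial>M) =
      (\<integral>\<omega>. indicator A \<omega> * iexp (s * Y \<omega>) - of_real (prob A) * iexp (s * Y \<omega>) \<partial>M)" for s
    by (rule Bochner_Integration.integral_cong) (auto simp: indicator_def left_diff_distrib)
  moreover have "integrable M (\<lambda>\<omega>. indicator A \<omega> * iexp (s * Y \<omega>))" for s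
    by (rule integrable_indicator_iexp) measurable
  moreover have "integrable M (\<lambda>\<omega>. of_real (prob A) * iexp (s * Y \<omega>))" for s
    by (intro integrable_mult_right integrable_const_bound[where B=1] AE_I2) auto
  ultimately have "(\<integral>\<omega>. of_real (indicator A \<omega> - prob A) * iexp (s * Y \<omega>) \<partial>M) = 0" for s
    by simp
  then have "0 = (\<integral>\<omega>. (indicator A \<omega> - prob A) * indicator B (Y \<omega>) \<partial>M)"
    by (intro Levy_uniqueness_weighted[symmetric] Bochner_Integration.integrable_diff
        integrable_real_indicator A) (simp_all add: less_top[symmetric])
  also have "\<dots> = (\<integral>\<omega>. indicator (A \<inter> (Y -` B \<inter> space M)) \<omega> - prob A * indicator (Y -` B \<inter> space M) \<omega> \<partial>M)"
    by (rule Bochner_Integration.integral_cong) (auto simp: indicator_def)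
  also have "\<dots> = prob (A \<inter> (Y -` B \<inter> space M)) - prob A * prob (Y -` B \<inter> space M)"
    by (subst Bochner_Integration.integral_diff) (auto simp: less_top[symmetric])
  finally show ?thesis by simp
qed

theorem indep_gen_sigma_vimage:
  "indep_set (sets (gen_sigma M m X)) {Y -` B \<inter> space M | B. B \<in> sets borel}"
proof -
  define Cyl where "Cyl = {cylinder M X (Suc m) C | C. \<forall>i. C i \<in> sets borel}"
  define V where "V = {Y -` B \<inter> space M | B. B \<in> sets borel}"
  have "indep_set Cyl V"
    unfolding indep_sets2_eq
  proof (intro conjI ballI)
    show "Cyl \<subseteq> events"
      unfolding Cyl_def using sets_cylinder_X by auto
    show "V \<subseteq> events"
      unfolding V_def by auto
    show "prob (a \<inter> b) = prob a * prob b" if "a \<in> Cyl" "b \<in> V" for a b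
      using that prob_cylinder_Int_vimage unfolding Cyl_def V_def by auto
  qed
  then have "indep_set (sigma_sets (space M) Cyl) (sigma_sets (space M) V)"
    unfolding Cyl_def V_def by (intro indep_set_sigma_sets Int_stable_cylinders Int_stable_vimage)
  then show ?thesis
    using sets_gen_sigma_subset_cylinders[of M m X, folded Cyl_def] unfolding indep_sets2_eq V_def by blast
qed

end

context prob_space
begin

lemma indep_var_if_indep_set_subalgebra:
  fixes Y :: "'a \<Rightarrow> real"
  assumes F: "subalgebra M F" and indep: "indep_set (sets F) {Y -` B \<inter> space M | B. B \<in> sets borel}"
    and [measurable]: "Y \<in> borel_measurable M"
    and U: "U \<in> measurable F S" and [measurable]: "g \<in> measurable borel S"
  shows "indep_var S U S (\<lambda>\<omega>. g (Y \<omega>))"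
proof -
  have space_F: "space F = space M"
    using F by (simp add: subalgebra_def)
  have "{U -` A \<inter> space M | A. A \<in> sets S} \<subseteq> sets F"
    using measurable_sets[OF U] space_F by auto
  then have U_sets: "sigma_sets (space M) {U -` A \<inter> space M | A. A \<in> sets S} \<subseteq> sets F"
    using sets.sigma_sets_subset[where M=F] space_F by simp
  have "{(\<lambda>\<omega>. g (Y \<omega>)) -` A \<inter> space M | A. A \<in> sets S} \<subseteq> {Y -` B \<inter> space M | B. B \<in> sets borel}"
  proof (rule subsetI)
    fix E assume "E \<in> {(\<lambda>\<omega>. g (Y \<omega>)) -` A \<inter> space M | A. A \<in> sets S}"
    then obtain A where "E = Y -` (g -` A) \<inter> space M" "A \<in> sets S"
      by auto
    moreover have "g -` A \<in> sets borel"
      using measurable_sets[of g borel S A] \<open>A \<in> sets S\<close> by simp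
    ultimately show "E \<in> {Y -` B \<inter> space M | B. B \<in> sets borel}"
      by blast
  qed
  then have "sigma_sets (space M) {(\<lambda>\<omega>. g (Y \<omega>)) -` A \<inter> space M | A. A \<in> sets S} \<subseteq>
      sigma_sets (space M) {Y -` B \<inter> space M | B. B \<in> sets borel}"
    by (rule sigma_sets_mono')
  also have "\<dots> = {Y -` B \<inter> space M | B. B \<in> sets borel}"
    by (rule sigma_sets_vimage_sets) (simp add: measurable_space)
  finally have gY_sets: "sigma_sets (space M) {(\<lambda>\<omega>. g (Y \<omega>)) -` A \<inter> space M | A. A \<in> sets S} \<subseteq>
      {Y -` B \<inter> space M | B. B \<in> sets borel}" .
  have "indep_set (sigma_sets (space M) {U -` A \<inter> space M | A. A \<in> sets S})
      (sigma_sets (space M) {(\<lambda>\<omega>. g (Y \<omega>)) -` A \<inter> space M | A. A \<in> sets S})"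
    unfolding indep_sets2_eq
  proof (intro conjI ballI)
    show "sigma_sets (space M) {U -` A \<inter> space M | A. A \<in> sets S} \<subseteq> events"
      using U_sets indep_setD_ev1[OF indep] by (rule order_trans)
    show "sigma_sets (space M) {(\<lambda>\<omega>. g (Y \<omega>)) -` A \<inter> space M | A. A \<in> sets S} \<subseteq> events"
      using gY_sets indep_setD_ev2[OF indep] by (rule order_trans)
  qed (use U_sets gY_sets in \<open>auto intro: indep_setD[OF indep]\<close>)
  then show ?thesis
    using measurable_from_subalg[OF F U] unfolding indep_var_eq by simp
qed

lemma real_cond_exp_add_indep:
  fixes Y Z :: "'a \<Rightarrow> real"
  assumes F: "subalgebra M F" and indep: "indep_set (sets F) {Y -` B \<inter> space M | B. B \<in> sets borel}"
    and Y: "integrable M Y" "expectation Y = 0"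
    and Z: "integrable M Z" "Z \<in> borel_measurable F"
  shows "AE \<omega> in M. real_cond_exp M F (\<lambda>\<omega>. Z \<omega> + Y \<omega>) \<omega> = Z \<omega>"
proof -
  have "sigma_finite_subalgebra M F"
    using F by (intro finite_measure_subalgebra_is_sigma_finite)
      (simp add: finite_measure_subalgebra_def finite_measure_subalgebra_axioms_def finite_measure_axioms)
  then show ?thesis
  proof (rule sigma_finite_subalgebra.real_cond_exp_charact)
    fix A assume A: "A \<in> sets F"
    then have A_events: "A \<in> events"
      using F unfolding subalgebra_def by blast
    have "indep_var borel (indicator A) borel (\<lambda>\<omega>. id (Y \<omega>))"
      using Y(1)
      by (intro indep_var_if_indep_set_subalgebra[OF F indep] borel_measurable_indicator[OF A]) simp_all
    then have "indep_var borel (indicator A) borel Y"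
      by simp
    then have "(\<integral>\<omega>. indicator A \<omega> * Y \<omega> \<partial>M) = expectation (indicator A) * expectation Y"
      by (rule indep_var_lebesgue_integral) (use A_events Y(1) in \<open>simp_all add: less_top[symmetric]\<close>)
    then have "(\<integral>\<omega>. Y \<omega> * indicator A \<omega> \<partial>M) = 0"
      using Y(2) by (simp add: mult.commute)
    moreover have "(\<integral>\<omega>. (Z \<omega> + Y \<omega>) * indicator A \<omega> \<partial>M) =
        (\<integral>\<omega>. Z \<omega> * indicator A \<omega> \<partial>M) + (\<integral>\<omega>. Y \<omega> * indicator A \<omega> \<partial>M)"
      unfolding distrib_right using A_events Y(1) Z(1)
      by (intro Bochner_Integration.integral_add integrable_real_mult_indicator)
    ultimately show "(\<integral>\<omega>\<in>A. Z \<omega> + Y \<omega> \<partial>M) = (\<integral>\<omega>\<in>A. Z \<omega> \<partial>M)"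
      unfolding set_lebesgue_integral_def by (simp add: mult.commute)
  qed (use Y Z in auto)
qed

lemma emeasure_indep_var_vimage:
  assumes indep: "indep_var S U T V" and [measurable]: "G \<in> sets (S \<Otimes>\<^sub>M T)"
  shows "emeasure M ((\<lambda>\<omega>. (U \<omega>, V \<omega>)) -` G \<inter> space M) =
    (\<integral>\<^sup>+u. emeasure M {\<omega> \<in> space M. (u, V \<omega>) \<in> G} \<partial>distr M S U)"
proof -
  have [measurable]: "U \<in> measurable M S" "V \<in> measurable M T"
    using indep by (auto simp: indep_var_eq)
  have "emeasure M ((\<lambda>\<omega>. (U \<omega>, V \<omega>)) -` G \<inter> space M) = emeasure (distr M (S \<Otimes>\<^sub>M T) (\<lambda>\<omega>. (U \<omega>, V \<omega>))) G"
    by (simp add: emeasure_distr)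
  also have "\<dots> = emeasure (distr M S U \<Otimes>\<^sub>M distr M T V) G"
    using indep by (simp add: indep_var_distribution_eq)
  also have "\<dots> = (\<integral>\<^sup>+u. emeasure (distr M T V) (Pair u -` G) \<partial>distr M S U)"
    by (rule sigma_finite_measure.emeasure_pair_measure_alt)
       (simp_all add: prob_space_imp_sigma_finite prob_space_distr)
  also have "\<dots> = (\<integral>\<^sup>+u. emeasure M {\<omega> \<in> space M. (u, V \<omega>) \<in> G} \<partial>distr M S U)"
  proof (rule nn_integral_cong)
    fix u
    have "Pair u -` G \<in> sets T"
      by measurable
    then show "emeasure (distr M T V) (Pair u -` G) = emeasure M {\<omega> \<in> space M. (u, V \<omega>) \<in> G}"
      by (subst emeasure_distr) (auto intro!: arg_cong[where f="emeasure M"])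
  qed
  finally show ?thesis .
qed

text \<open>By independence and Fubini, the event is controlled section-wise, where \<open>W\<close> is a
  constant shift of \<open>Y\<close>.\<close>

lemma prob_Int_abs_add_less_le_if_indep:
  fixes W :: "'a \<Rightarrow> real"
  assumes F: "subalgebra M F" and indep: "indep_set (sets F) {Y -` B \<inter> space M | B. B \<in> sets borel}"
    and Y [measurable]: "Y \<in> borel_measurable M"
    and A: "A \<in> sets F" and W: "W \<in> borel_measurable F"
    and shift_le: "\<And>w. prob {\<omega> \<in> space M. \<bar>Y \<omega> + w\<bar> < x} \<le> prob {\<omega> \<in> space M. \<bar>Y \<omega>\<bar> < x}"
  shows "prob (A \<inter> {\<omega> \<in> space M. \<bar>Y \<omega> + W \<omega>\<bar> < x}) \<le> prob A * prob {\<omega> \<in> space M. \<bar>Y \<omega>\<bar> < x}"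
proof -
  define R where "R = (borel \<Otimes>\<^sub>M borel :: (real \<times> real) measure)"
  define U where "U \<omega> = (indicator A \<omega> :: real, W \<omega>)" for \<omega>
  define V where "V \<omega> = (Y \<omega>, 0 :: real)" for \<omega>
    \<comment> \<open>\<open>indep_var\<close> needs both variables to take values in the same space\<close>
  define G where "G = {p \<in> space (R \<Otimes>\<^sub>M R). fst (fst p) = 1 \<and> \<bar>fst (snd p) + snd (fst p)\<bar> < x}"
  define T where "T = {u \<in> space R. fst u = 1}"
  define c where "c = emeasure M {\<omega> \<in> space M. \<bar>Y \<omega>\<bar> < x}"
  have [measurable]: "A \<in> events"
    using A F by (auto simp: subalgebra_def)
  have UF: "U \<in> measurable F R"
    unfolding U_def[abs_def] R_def by (intro measurable_Pair borel_measurable_indicator[OF A] W)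
  have [measurable]: "U \<in> measurable M R"
    by (rule measurable_from_subalg[OF F UF])
  have "(\<lambda>y. (y, 0)) \<in> measurable borel R"
    unfolding R_def by measurable
  then have indep_UV: "indep_var R U R V"
    unfolding V_def by (rule indep_var_if_indep_set_subalgebra[OF F indep Y UF])
  have [measurable]: "G \<in> sets (R \<Otimes>\<^sub>M R)" "T \<in> sets R"
    unfolding G_def T_def R_def by measurable
  have section_le: "emeasure M {\<omega> \<in> space M. (u, V \<omega>) \<in> G} \<le> c * indicator T u" for u
  proof (cases "fst u = 1")
    case True
    then have "{\<omega> \<in> space M. (u, V \<omega>) \<in> G} = {\<omega> \<in> space M. \<bar>Y \<omega> + snd u\<bar> < x}"
      by (auto simp: G_def V_def R_def space_pair_measure)
    then show ?thesis
      using True shift_le[of "snd u"] by (simp add: c_def T_def R_def space_pair_measure emeasure_eq_measure)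
  qed (simp add: G_def)
  have "A \<inter> {\<omega> \<in> space M. \<bar>Y \<omega> + W \<omega>\<bar> < x} = (\<lambda>\<omega>. (U \<omega>, V \<omega>)) -` G \<inter> space M"
    using sets.sets_into_space[of A M]
    by (auto simp: G_def U_def V_def R_def indicator_def space_pair_measure)
  then have "emeasure M (A \<inter> {\<omega> \<in> space M. \<bar>Y \<omega> + W \<omega>\<bar> < x}) =
      (\<integral>\<^sup>+u. emeasure M {\<omega> \<in> space M. (u, V \<omega>) \<in> G} \<partial>distr M R U)"
    by (simp add: emeasure_indep_var_vimage[OF indep_UV])
  also have "\<dots> \<le> (\<integral>\<^sup>+u. c * indicator T u \<partial>distr M R U)"
    by (intro nn_integral_mono section_le)
  also have "\<dots> = c * emeasure M (U -` T \<inter> space M)"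
    by (simp add: nn_integral_cmult_indicator emeasure_distr)
  also have "U -` T \<inter> space M = A"
    using sets.sets_into_space[of A M] by (auto simp: T_def U_def R_def indicator_def space_pair_measure)
  finally have "ennreal (prob (A \<inter> {\<omega> \<in> space M. \<bar>Y \<omega> + W \<omega>\<bar> < x})) \<le>
      ennreal (prob A * prob {\<omega> \<in> space M. \<bar>Y \<omega>\<bar> < x})"
    by (simp add: c_def emeasure_eq_measure ennreal_mult mult.commute)
  then show ?thesis
    by (simp add: ennreal_le_iff)
qed

end

section \<open>Centered Gaussian vectors\<close>

locale centered_gaussian = prob_space +
  fixes n :: nat and X :: "nat \<Rightarrow> 'a \<Rightarrow> real"
  assumes gaussian: "centered_gaussian_vector M n X"
begin

definition lincomb :: "(nat \<Rightarrow> real) \<Rightarrow> 'a \<Rightarrow> real" where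
  "lincomb c \<omega> = (\<Sum>i\<le>n. c i * X i \<omega>)"

lemma measurable_X: "i \<le> n \<Longrightarrow> X i \<in> borel_measurable M"
  using gaussian by (simp add: centered_gaussian_vector_def)

lemma measurable_lincomb [measurable]: "lincomb c \<in> borel_measurable M"
  unfolding lincomb_def[abs_def] using measurable_X
  by (intro borel_measurable_sum borel_measurable_times) auto

lemma centered_normal_lincomb: "centered_normal M (lincomb c)"
  using gaussian measurable_lincomb
  unfolding centered_normal_def centered_gaussian_vector_def lincomb_def[abs_def] by blast

lemma lincomb_add: "lincomb (\<lambda>i. c i + d i) \<omega> = lincomb c \<omega> + lincomb d \<omega>"
  by (simp add: lincomb_def sum.distrib algebra_simps)

lemma lincomb_diff: "lincomb (\<lambda>i. c i - d i) \<omega> = lincomb c \<omega> - lincomb d \<omega>"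
  by (simp add: lincomb_def sum_subtractf algebra_simps)

lemma lincomb_scale: "lincomb (\<lambda>i. r * c i) \<omega> = r * lincomb c \<omega>"
  by (simp add: lincomb_def sum_distrib_left algebra_simps)

lemma lincomb_unit_vec:
  assumes "i \<le> n"
  shows "lincomb (unit_vec i) \<omega> = X i \<omega>"
proof -
  have "lincomb (unit_vec i) \<omega> = (\<Sum>j\<le>n. if j = i then X i \<omega> else 0)"
    unfolding lincomb_def unit_vec_def by (rule sum.cong) auto
  then show ?thesis using assms by simp
qed

lemma lincomb_below:
  "(\<And>i. i \<ge> k \<Longrightarrow> c i = 0) \<Longrightarrow> k \<le> Suc n \<Longrightarrow> lincomb c \<omega> = (\<Sum>i<k. c i * X i \<omega>)"
  unfolding lincomb_def atMost_atLeast0 by (intro sum.mono_neutral_right) auto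

lemma integrable_lincomb_mult: "integrable M (\<lambda>\<omega>. lincomb c \<omega> * lincomb d \<omega>)"
proof -
  have "(\<lambda>\<omega>. lincomb c \<omega> * lincomb d \<omega>) =
      (\<lambda>\<omega>. ((lincomb (\<lambda>i. c i + d i) \<omega>)\<^sup>2 - (lincomb (\<lambda>i. c i - d i) \<omega>)\<^sup>2) / 4)"
    by (simp add: lincomb_add lincomb_diff power2_eq_square algebra_simps)
  then show ?thesis
    using centered_normal_integrable_square[OF centered_normal_lincomb] by simp
qed

definition covariance :: "(nat \<Rightarrow> real) \<Rightarrow> (nat \<Rightarrow> real) \<Rightarrow> real" where
  "covariance c d = expectation (\<lambda>\<omega>. lincomb c \<omega> * lincomb d \<omega>)"

sublocale cov: psd_form covariance
proof
  fix c d e :: "nat \<Rightarrow> real" and r :: real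
  show "covariance (\<lambda>i. c i + d i) e = covariance c e + covariance d e"
    unfolding covariance_def lincomb_add distrib_right
    by (rule Bochner_Integration.integral_add[OF integrable_lincomb_mult integrable_lincomb_mult])
  show "covariance (\<lambda>i. r * c i) e = r * covariance c e"
    unfolding covariance_def lincomb_scale by (simp add: mult.assoc)
  show "covariance c d = covariance d c"
    unfolding covariance_def by (simp add: mult.commute)
  show "covariance c c \<ge> 0"
    unfolding covariance_def by simp
qed

lemma char_lincomb: "expectation (\<lambda>\<omega>. iexp (lincomb c \<omega>)) = of_real (exp (- covariance c c / 2))"
  using centered_normal_char[OF centered_normal_lincomb] by (simp add: covariance_def power2_eq_square)

definition proj_coeff :: "nat \<Rightarrow> real" where
  "proj_coeff = (SOME a. (\<forall>i\<ge>n. a i = 0) \<and>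
     (\<forall>j<n. covariance (\<lambda>i. unit_vec n i - a i) (unit_vec j) = 0))"

lemma proj_coeff:
  "\<forall>i\<ge>n. proj_coeff i = 0" "\<forall>j<n. covariance (\<lambda>i. unit_vec n i - proj_coeff i) (unit_vec j) = 0"
  using someI_ex[OF cov.projection_exists[of n "unit_vec n"]] unfolding proj_coeff_def by blast+

definition projection :: "'a \<Rightarrow> real" where
  "projection \<omega> = (\<Sum>i<n. proj_coeff i * X i \<omega>)"

definition residual :: "'a \<Rightarrow> real" where
  "residual = lincomb (\<lambda>i. unit_vec n i - proj_coeff i)"

lemma projection_eq_lincomb: "projection = lincomb proj_coeff"
  using proj_coeff(1) lincomb_below[of n proj_coeff] by (simp add: fun_eq_iff projection_def)

lemma X_eq_projection_plus_residual: "X n = (\<lambda>\<omega>. projection \<omega> + residual \<omega>)"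
  using lincomb_diff[of "unit_vec n" proj_coeff] lincomb_unit_vec[of n]
  by (simp add: fun_eq_iff residual_def projection_eq_lincomb)

lemma centered_normal_residual: "centered_normal M residual"
  unfolding residual_def by (rule centered_normal_lincomb)

lemma measurable_residual [measurable]: "residual \<in> borel_measurable M"
  by (simp add: residual_def)

lemma measurable_projection_gen_sigma:
  assumes "n \<ge> 1"
  shows "projection \<in> borel_measurable (gen_sigma M (n - 1) X)"
proof -
  have [measurable]: "X i \<in> borel_measurable (gen_sigma M (n - 1) X)" if "i < n" for i
    using that by (intro measurable_gen_sigma) simp
  show ?thesis
    unfolding projection_def[abs_def] by measurable
qed

lemma covariance_residual:
  assumes "\<And>i. i \<ge> n \<Longrightarrow> c i = 0"
  shows "covariance (\<lambda>i. unit_vec n i - proj_coeff i) c = 0"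
  by (rule cov.orthogonal_span[of n]) (simp_all add: proj_coeff(2) assms)

lemma char_factorization_residual:
  assumes "n \<ge> 1"
  shows "char_factorization M (n - 1) X residual"
proof
  show "X i \<in> borel_measurable M" if "i \<le> n - 1" for i
    using measurable_X that by simp
  show "residual \<in> borel_measurable M"
    by (simp add: residual_def)
  fix s :: real and t :: "nat \<Rightarrow> real"
  define d where "d i = unit_vec n i - proj_coeff i" for i
  define t' where "t' i = (if i < n then t i else 0)" for i
  have t': "(\<Sum>j\<le>n - 1. t j * X j \<omega>) = lincomb t' \<omega>" for \<omega>
    using assms lincomb_below[of n t' \<omega>] by (simp add: t'_def lessThan_Suc_atMost[symmetric])
  have "covariance d t' = 0"
    unfolding d_def by (rule covariance_residual) (simp add: t'_def)
  then have cov: "covariance (\<lambda>i. s * d i + t' i) (\<lambda>i. s * d i + t' i) =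
      s\<^sup>2 * covariance d d + covariance t' t'"
    by (simp add: cov.add_left cov.add_right cov.scale_left cov.scale_right cov.commute[of t' d]
        power2_eq_square algebra_simps)
  have sum: "s * residual \<omega> + lincomb t' \<omega> = lincomb (\<lambda>i. s * d i + t' i) \<omega>" for \<omega>
    by (simp add: residual_def d_def lincomb_add lincomb_scale)
  have scaled: "s * residual \<omega> = lincomb (\<lambda>i. s * d i) \<omega>" for \<omega>
    by (simp add: residual_def d_def lincomb_scale)
  have cov_scaled: "covariance (\<lambda>i. s * d i) (\<lambda>i. s * d i) = s\<^sup>2 * covariance d d"
    by (simp add: cov.scale_left cov.scale_right power2_eq_square)
  have "exp (- (s\<^sup>2 * covariance d d + covariance t' t') / 2) =
      exp (- covariance t' t' / 2) * exp (- (s\<^sup>2 * covariance d d) / 2)"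
    by (simp add: field_simps flip: exp_add)
  then show "expectation (\<lambda>\<omega>. iexp (s * residual \<omega> + (\<Sum>j\<le>n - 1. t j * X j \<omega>))) =
      expectation (\<lambda>\<omega>. iexp (\<Sum>j\<le>n - 1. t j * X j \<omega>)) * expectation (\<lambda>\<omega>. iexp (s * residual \<omega>))"
    unfolding t' sum char_lincomb cov unfolding scaled char_lincomb cov_scaled by simp
qed

lemma indep_gen_sigma_residual:
  assumes "n \<ge> 1"
  shows "indep_set (sets (gen_sigma M (n - 1) X)) {residual -` B \<inter> space M | B. B \<in> sets borel}"
proof -
  interpret char_factorization M "n - 1" X residual
    by (rule char_factorization_residual[OF assms])
  show ?thesis
    by (rule indep_gen_sigma_vimage)
qed

lemma subalgebra_gen_sigma_X: "subalgebra M (gen_sigma M m X)" if "m \<le> n"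
  using measurable_X that by (intro subalgebra_gen_sigma) simp

lemma real_cond_exp_eq_projection:
  assumes "n \<ge> 1"
  shows "AE \<omega> in M. real_cond_exp M (gen_sigma M (n - 1) X) (X n) \<omega> = projection \<omega>"
  unfolding X_eq_projection_plus_residual
  using centered_normal_integrable[OF centered_normal_lincomb, of proj_coeff]
    centered_normal_integrable[OF centered_normal_residual]
    centered_normal_expectation[OF centered_normal_residual]
  by (intro real_cond_exp_add_indep subalgebra_gen_sigma_X indep_gen_sigma_residual
      measurable_projection_gen_sigma assms) (simp_all add: projection_eq_lincomb)

lemma prob_abs_sub_real_cond_exp_less:
  assumes "n \<ge> 1"
  shows "prob {\<omega> \<in> space M. \<bar>X n \<omega> - real_cond_exp M (gen_sigma M (n - 1) X) (X n) \<omega>\<bar> < x} =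
    prob {\<omega> \<in> space M. \<bar>residual \<omega>\<bar> < x}"
proof (rule measure_eq_AE)
  show "AE \<omega> in M. (\<omega> \<in> {\<omega> \<in> space M. \<bar>X n \<omega> - real_cond_exp M (gen_sigma M (n - 1) X) (X n) \<omega>\<bar> < x}) =
      (\<omega> \<in> {\<omega> \<in> space M. \<bar>residual \<omega>\<bar> < x})"
    using real_cond_exp_eq_projection[OF assms] by eventually_elim (simp add: X_eq_projection_plus_residual)
  have [measurable]: "X n \<in> borel_measurable M"
    using measurable_X by simp
  show "{\<omega> \<in> space M. \<bar>X n \<omega> - real_cond_exp M (gen_sigma M (n - 1) X) (X n) \<omega>\<bar> < x} \<in> events"
    by measurable
qed measurable

lemma prob_increments_le:
  assumes "n \<ge> 1" and "x > 0"
  shows "prob {\<omega> \<in> space M. \<forall>j\<in>{1..n}. \<bar>X j \<omega> - X (j - 1) \<omega>\<bar> < x}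
         \<le> prob {\<omega> \<in> space M. \<forall>j\<in>{1..<n}. \<bar>X j \<omega> - X (j - 1) \<omega>\<bar> < x}
           * prob {\<omega> \<in> space M. \<bar>X n \<omega> - real_cond_exp M (gen_sigma M (n - 1) X) (X n) \<omega>\<bar> < x}"
proof -
  define F where "F = gen_sigma M (n - 1) X"
  define A where "A = {\<omega> \<in> space M. \<forall>j\<in>{1..<n}. \<bar>X j \<omega> - X (j - 1) \<omega>\<bar> < x}"
  have [measurable]: "X i \<in> borel_measurable F" if "i < n" for i
    unfolding F_def using that by (intro measurable_gen_sigma) simp
  have "{\<omega> \<in> space F. \<forall>j\<in>{1..<n}. \<bar>X j \<omega> - X (j - 1) \<omega>\<bar> < x} \<in> sets F"
    by (intro sets.sets_Collect_finite_All) auto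
  then have A_F: "A \<in> sets F"
    unfolding A_def F_def by simp
  have "{\<omega> \<in> space M. \<forall>j\<in>{1..n}. \<bar>X j \<omega> - X (j - 1) \<omega>\<bar> < x} =
      A \<inter> {\<omega> \<in> space M. \<bar>residual \<omega> + (projection \<omega> - X (n - 1) \<omega>)\<bar> < x}"
  proof -
    have "{1..n} = insert n {1..<n}"
      using assms(1) by auto
    then show ?thesis
      unfolding A_def by (auto simp: X_eq_projection_plus_residual algebra_simps)
  qed
  moreover have "prob (A \<inter> {\<omega> \<in> space M. \<bar>residual \<omega> + (projection \<omega> - X (n - 1) \<omega>)\<bar> < x}) \<le>
      prob A * prob {\<omega> \<in> space M. \<bar>residual \<omega>\<bar> < x}"
  proof (rule prob_Int_abs_add_less_le_if_indep[OF _ indep_gen_sigma_residual[OF assms(1), folded F_def]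
        _ A_F])
    show "(\<lambda>\<omega>. projection \<omega> - X (n - 1) \<omega>) \<in> borel_measurable F"
      using measurable_projection_gen_sigma[OF assms(1)] measurable_gen_sigma[where i="n - 1" and m="n - 1"]
      unfolding F_def by (intro borel_measurable_diff) auto
  qed (use centered_normal_prob_abs_add_less_le[OF centered_normal_residual assms(2)] in
      \<open>auto simp: F_def intro: subalgebra_gen_sigma_X\<close>)
  ultimately show ?thesis
    unfolding prob_abs_sub_real_cond_exp_less[OF assms(1)] A_def F_def by simp
qed

end

theorem lemma2p1:
  fixes M :: "'a measure" and X :: "nat \<Rightarrow> 'a \<Rightarrow> real" and n :: nat and x :: real
  assumes "prob_space M"
    and "n \<ge> 1"
    and "centered_gaussian_vector M n X"
    and "x > 0"
  shows "measure M {\<omega> \<in> space M. \<forall>j\<in>{1..n}. \<bar>X j \<omega> - X (j - 1) \<omega>\<bar> < x}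
         \<le> measure M {\<omega> \<in> space M. \<forall>j\<in>{1..<n}. \<bar>X j \<omega> - X (j - 1) \<omega>\<bar> < x}
           * measure M {\<omega> \<in> space M.
               \<bar>X n \<omega> - real_cond_exp M (gen_sigma M (n - 1) X) (X n) \<omega>\<bar> < x}"
proof -
  interpret centered_gaussian M n X
    using assms(1,3) by (simp add: centered_gaussian_def centered_gaussian_axioms_def)
  show ?thesis
    using prob_increments_le[OF assms(2,4)] .
qed

end
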